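(* The following identities hold: \begin{align*}\sum_{k=1}^\infty\frac{11319k^2-497k-746}{(4k+1)(-2)^k\binom{4k}k}&=48\log2-246, \\\sum_{k=1}^\infty\frac{39083k^2-2829k-3106}{(4k+1)(-24)^k\binom{4k}k}&=-94-64\log\frac23, \\\sum_{k=1}^\infty\frac{442611k^2+41347k-17434}{(4k+1)(-192)^k\binom{4k}k}&=26+512\log\frac34. \end{align*} *)

theory Defs
  imports Complex_Main
begin

end

theory Submission
  imports Defs "HOL-Analysis.Analysis"
begin

(* Since 1 / ((4k+1) * binomial(4k,k)) = B(k+1, 3k+1) is the integral of (t(1-t)^3)^k over [0,1],
   the series sum of P(k) / ((4k+1) x^k binomial(4k,k)) with P quadratic is the integral over [0,1]
   of G(t(1-t)^3/x), where G(z) = sum of P(k) z^k is a rational function of z; termwise integration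
   is justified because t(1-t)^3 <= 27/256 < |x|.  For x = -2, -24, -192 the denominator
   x - t(1-t)^3 of the integrand splits into a linear and a cubic factor, and Hermite reduction
   yields an antiderivative of the form B(t) / (x - t(1-t)^3)^2 + c1 ln(linear) + c2 ln(cubic). *)

lemma n_power_sums:
  fixes z :: "'a :: {banach,real_normed_field}"
  assumes "norm z < 1"
  shows "(\<lambda>n. of_nat n * z ^ n) sums (z / (1 - z)^2)"
proof -
  have "(\<lambda>n. z * (of_nat (Suc n) * z ^ n)) sums (z * (1 / (1 - z)^2))"
    by (intro sums_mult geometric_deriv_sums assms)
  then have "(\<lambda>n. of_nat (Suc n) * z ^ Suc n) sums (z / (1 - z)^2)"
    by (simp add: mult_ac)
  then show ?thesis
    by (subst (asm) sums_Suc_iff) simp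
qed

lemma n_squared_power_sums:
  fixes z :: "'a :: {banach,real_normed_field}"
  assumes "norm z < 1"
  shows "(\<lambda>n. of_nat n ^ 2 * z ^ n) sums (z * (1 + z) / (1 - z)^3)"
proof -
  have "(\<lambda>n. diffs of_nat n * z ^ n) sums ((1 + z) / (1 - z)^3)"
  proof (rule termdiffs_sums_strong[OF n_power_sums _ assms])
    have "1 - z \<noteq> 0" using assms by auto
    then show "((\<lambda>z. z / (1 - z)^2) has_field_derivative (1 + z) / (1 - z)^3) (at z)"
      by (auto intro!: derivative_eq_intros simp: divide_simps) algebra
  qed
  then have "(\<lambda>n. z * (of_nat (Suc n) ^ 2 * z ^ n)) sums (z * ((1 + z) / (1 - z)^3))"
    unfolding diffs_def by (intro sums_mult) (simp add: power2_eq_square)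
  then have "(\<lambda>n. of_nat (Suc n) ^ 2 * z ^ Suc n) sums (z * (1 + z) / (1 - z)^3)"
    by (simp add: mult_ac)
  then show ?thesis
    by (subst (asm) sums_Suc_iff) simp
qed

definition quadratic_gf :: "'a \<Rightarrow> 'a \<Rightarrow> 'a \<Rightarrow> 'a \<Rightarrow> 'a::field" where
  "quadratic_gf a b c z = a * z * (1 + z) / (1 - z)^3 + b * z / (1 - z)^2 + c / (1 - z)"

lemma quadratic_gf_sums:
  fixes z :: "'a :: {banach,real_normed_field}"
  assumes "norm z < 1"
  shows "(\<lambda>n. (a * of_nat n ^ 2 + b * of_nat n + c) * z ^ n) sums quadratic_gf a b c z"
proof -
  have "(\<lambda>n. a * (of_nat n ^ 2 * z ^ n) + b * (of_nat n * z ^ n) + c * z ^ n) sums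
          (a * (z * (1 + z) / (1 - z)^3) + b * (z / (1 - z)^2) + c * (1 / (1 - z)))"
    using assms by (intro sums_add sums_mult n_squared_power_sums n_power_sums geometric_sums)
  then show ?thesis
    by (simp add: quadratic_gf_def algebra_simps)
qed

lemma has_integral_power_mult_power_one_minus:
  "((\<lambda>t::real. t ^ m * (1 - t) ^ n) has_integral
      1 / ((real (m + n) + 1) * real ((m + n) choose m))) {0..1}"
proof -
  have "((\<lambda>t. t powr (real m + 1 - 1) * (1 - t) powr (real n + 1 - 1)) has_integral
          Beta (real m + 1) (real n + 1)) {0<..<1}"
    using has_integral_Beta_real[of "real m + 1" "real n + 1"] by (simp add: has_integral_Icc_iff_Ioo)
  then have "((\<lambda>t::real. t ^ m * (1 - t) ^ n) has_integral Beta (real m + 1) (real n + 1)) {0<..<1}"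
    by (rule has_integral_eq[rotated]) (simp add: powr_realpow)
  moreover have "Beta (real m + 1) (real n + 1) = 1 / ((real (m + n) + 1) * real ((m + n) choose m))"
  proof -
    have "Beta (real m + 1) (real n + 1) = fact m * fact n / fact (m + n + 1)"
      using Gamma_fact[of m, where 'a=real] Gamma_fact[of n, where 'a=real]
        Gamma_fact[of "m + n + 1", where 'a=real]
      by (simp add: Beta_def add_ac)
    also have "\<dots> = 1 / ((real (m + n) + 1) * real ((m + n) choose m))"
      by (simp add: binomial_fact field_simps)
    finally show ?thesis .
  qed
  ultimately show ?thesis
    by (simp add: has_integral_Icc_iff_Ioo)
qed

lemma has_integral_t_one_minus_t_cubed_power:
  "((\<lambda>t::real. (t * (1 - t)^3) ^ k) has_integral
      1 / ((4 * real k + 1) * real ((4 * k) choose k))) {0..1}"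
  using has_integral_power_mult_power_one_minus[of k "3 * k"]
  by (simp add: power_mult_distrib power_mult)

lemma has_integral_series_termwise:
  fixes f :: "nat \<Rightarrow> 'a::ordered_euclidean_space \<Rightarrow> 'b::banach"
  assumes cont: "\<And>n. continuous_on {a..b} (f n)"
    and int: "\<And>n. (f n has_integral I n) {a..b}"
    and bound: "\<And>n x. x \<in> {a..b} \<Longrightarrow> norm (f n x) \<le> M n"
    and "summable M"
  shows "I sums integral {a..b} (\<lambda>x. \<Sum>n. f n x)"
proof -
  have "uniform_limit {a..b} (\<lambda>n x. \<Sum>i<n. f i x) (\<lambda>x. \<Sum>n. f n x) sequentially"
    by (rule Weierstrass_m_test[OF bound \<open>summable M\<close>])
  moreover have "continuous_on {a..b} (\<lambda>x. \<Sum>i<n. f i x)" for n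
    by (intro continuous_on_sum cont)
  ultimately obtain S J where S: "\<And>n. ((\<lambda>x. \<Sum>i<n. f i x) has_integral S n) {a..b}"
    and J: "((\<lambda>x. \<Sum>n. f n x) has_integral J) {a..b}" and "S \<longlonglongrightarrow> J"
    by (rule uniform_limit_integral) auto
  moreover have "S = (\<lambda>n. \<Sum>i<n. I i)"
    using has_integral_unique[OF S has_integral_sum[OF finite_lessThan int]] by blast
  ultimately show ?thesis
    by (simp add: sums_def integral_unique)
qed

lemma t_one_minus_t_cubed_le:
  fixes t :: real
  shows "t * (1 - t)^3 \<le> 27 / 256"
proof -
  have "27 / 256 - t * (1 - t)^3 = (4 * t - 1)^2 * ((4 * t - 5)^2 + 2) / 256"
    by algebra
  also have "\<dots> \<ge> 0" by simp
  finally show ?thesis by simp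
qed

lemma norm_quadratic_times_power_le:
  fixes y :: real
  assumes "\<bar>y\<bar> \<le> \<rho>"
  shows "norm ((a * real k ^ 2 + b * real k + c) * y ^ k)
    \<le> (\<bar>a\<bar> * real k ^ 2 + \<bar>b\<bar> * real k + \<bar>c\<bar>) * \<rho> ^ k"
proof -
  have "\<bar>a * real k ^ 2 + b * real k + c\<bar> \<le> \<bar>a\<bar> * real k ^ 2 + \<bar>b\<bar> * real k + \<bar>c\<bar>"
    by (intro order.trans[OF abs_triangle_ineq] add_mono) (auto simp: abs_mult)
  moreover have "\<bar>y\<bar> ^ k \<le> \<rho> ^ k"
    using assms by (intro power_mono) auto
  ultimately show ?thesis
    by (simp add: abs_mult power_abs mult_mono)
qed

lemma quadratic_over_binomial_4k_sums:
  fixes a b c x :: real and F :: "real \<Rightarrow> real"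
  assumes x: "27 / 256 < \<bar>x\<bar>"
    and F: "\<And>t. t \<in> {0..1} \<Longrightarrow>
      (F has_real_derivative quadratic_gf a b c (t * (1 - t)^3 / x)) (at t within {0..1})"
  shows "(\<lambda>k. (a * real k ^ 2 + b * real k + c) /
            ((4 * real k + 1) * x ^ k * real ((4 * k) choose k))) sums (F 1 - F 0)"
proof -
  define y where "y t = t * (1 - t)^3 / x" for t
  define \<rho> where "\<rho> = 27 / (256 * \<bar>x\<bar>)"
  define f where "f k t = (a * real k ^ 2 + b * real k + c) * y t ^ k" for k t
  have "x \<noteq> 0" and \<rho>: "0 \<le> \<rho>" "\<rho> < 1"
    using x by (auto simp: \<rho>_def)
  have y_le: "\<bar>y t\<bar> \<le> \<rho>" if "t \<in> {0..1}" for t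
    using that t_one_minus_t_cubed_le[of t] \<open>x \<noteq> 0\<close>
    by (auto simp: y_def \<rho>_def abs_divide field_simps)
  have f_integral: "(f k has_integral (a * real k ^ 2 + b * real k + c) /
            ((4 * real k + 1) * x ^ k * real ((4 * k) choose k))) {0..1}" for k
  proof -
    define P where "P = a * real k ^ 2 + b * real k + c"
    have "((\<lambda>t. P / x ^ k * (t * (1 - t)^3) ^ k) has_integral
        P / x ^ k * (1 / ((4 * real k + 1) * real ((4 * k) choose k)))) {0..1}"
      by (rule has_integral_mult_right[OF has_integral_t_one_minus_t_cubed_power])
    moreover have "f k = (\<lambda>t. P / x ^ k * (t * (1 - t)^3) ^ k)"
      by (simp add: fun_eq_iff f_def y_def P_def power_divide)
    ultimately show ?thesis
      by (simp add: P_def mult_ac)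
  qed
  have f_bound: "norm (f k t) \<le> (\<bar>a\<bar> * real k ^ 2 + \<bar>b\<bar> * real k + \<bar>c\<bar>) * \<rho> ^ k"
    if "t \<in> {0..1}" for k t
    unfolding f_def using y_le[OF that] by (rule norm_quadratic_times_power_le)
  have "summable (\<lambda>k. (\<bar>a\<bar> * real k ^ 2 + \<bar>b\<bar> * real k + \<bar>c\<bar>) * \<rho> ^ k)"
    using quadratic_gf_sums[of \<rho>] \<rho> by (auto intro: sums_summable)
  then have "(\<lambda>k. (a * real k ^ 2 + b * real k + c) /
      ((4 * real k + 1) * x ^ k * real ((4 * k) choose k))) sums integral {0..1} (\<lambda>t. \<Sum>k. f k t)"
    using \<open>x \<noteq> 0\<close> by (intro has_integral_series_termwise[OF _ f_integral f_bound])
      (auto simp: f_def y_def intro!: continuous_intros)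
  also have "integral {0..1} (\<lambda>t. \<Sum>k. f k t) = integral {0..1} (\<lambda>t. quadratic_gf a b c (y t))"
  proof (rule integral_cong)
    fix t :: real assume "t \<in> {0..1}"
    then have "norm (y t) < 1" using y_le \<rho> by fastforce
    then show "(\<Sum>k. f k t) = quadratic_gf a b c (y t)"
      unfolding f_def by (rule sums_unique[OF quadratic_gf_sums, symmetric])
  qed
  also have "\<dots> = F 1 - F 0"
    unfolding y_def
    by (intro integral_unique fundamental_theorem_of_calculus)
      (auto simp: has_real_derivative_iff_has_vector_derivative[symmetric] intro: F)
  finally show ?thesis .
qed

lemma quadratic_gf_divide:
  fixes x u :: "'a::field"
  assumes "x \<noteq> 0" "u \<noteq> x"
  shows "quadratic_gf a b c (u / x) =
    x * (a * u * (x + u) + b * u * (x - u) + c * (x - u)^2) / (x - u)^3"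
  using assms by (simp add: quadratic_gf_def field_simps) algebra

lemma has_real_derivative_quadratic_gf:
  fixes B P Q :: "real \<Rightarrow> real"
  assumes B: "(B has_real_derivative B') (at t)"
    and P: "(P has_real_derivative P') (at t)"
    and Q: "(Q has_real_derivative Q') (at t)"
    and pos: "0 < P t" "0 < Q t" and "x \<noteq> 0" "k \<noteq> 0"
    and factor: "x - t * (1 - t)^3 = k * P t * Q t"
    \<comment> \<open>the claimed derivative identity multiplied by (x - t(1-t)^3)^3, a polynomial identity\<close>
    and numerator: "B' * (x - t * (1 - t)^3) - 2 * B t * (3 * t * (1 - t)^2 - (1 - t)^3)
        + k * (c1 * P' * Q t + c2 * P t * Q') * (x - t * (1 - t)^3)^2
      = x * (a * (t * (1 - t)^3) * (x + t * (1 - t)^3) + b * (t * (1 - t)^3) * (x - t * (1 - t)^3)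
        + c * (x - t * (1 - t)^3)^2)"
  shows "((\<lambda>t. B t / (x - t * (1 - t)^3)^2 + c1 * ln (P t) + c2 * ln (Q t)) has_real_derivative
    quadratic_gf a b c (t * (1 - t)^3 / x)) (at t)"
proof -
  define u where "u = t * (1 - t)^3"
  define D where "D = x - u"
  define D' where "D' = 3 * t * (1 - t)^2 - (1 - t)^3"
  have "D \<noteq> 0"
    using pos factor \<open>k \<noteq> 0\<close> by (simp add: D_def u_def)
  have "((\<lambda>t. B t / (x - t * (1 - t)^3)^2 + c1 * ln (P t) + c2 * ln (Q t)) has_real_derivative
      (B' * D^2 - B t * (2 * D * D')) / (D^2)^2 + c1 * (P' / P t) + c2 * (Q' / Q t)) (at t)"
    using pos \<open>D \<noteq> 0\<close> unfolding D_def u_def D'_def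
    by (auto intro!: derivative_eq_intros B P Q simp: algebra_simps)
  moreover have "(B' * D^2 - B t * (2 * D * D')) / (D^2)^2 + c1 * (P' / P t) + c2 * (Q' / Q t)
      = quadratic_gf a b c (u / x)"
  proof -
    have "(B' * D^2 - B t * (2 * D * D')) / (D^2)^2 = (B' * D - 2 * B t * D') / D^3"
      using \<open>D \<noteq> 0\<close> by (simp add: field_simps power2_eq_square power3_eq_cube)
    moreover have "c1 * (P' / P t) + c2 * (Q' / Q t) = k * (c1 * P' * Q t + c2 * P t * Q') * D^2 / D^3"
      using pos \<open>D \<noteq> 0\<close>
      by (simp add: factor[folded u_def, folded D_def] field_simps power2_eq_square power3_eq_cube)
    ultimately have "(B' * D^2 - B t * (2 * D * D')) / (D^2)^2 + c1 * (P' / P t) + c2 * (Q' / Q t)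
        = (B' * D - 2 * B t * D' + k * (c1 * P' * Q t + c2 * P t * Q') * D^2) / D^3"
      by (simp only: add.assoc add_divide_distrib)
    also have "\<dots> = x * (a * u * (x + u) + b * u * D + c * D^2) / D^3"
      using numerator by (simp only: u_def D_def D'_def)
    also have "\<dots> = quadratic_gf a b c (u / x)"
      using \<open>x \<noteq> 0\<close> \<open>D \<noteq> 0\<close> by (simp add: quadratic_gf_divide D_def)
    finally show ?thesis .
  qed
  ultimately show ?thesis
    unfolding u_def by (rule DERIV_cong)
qed

lemma binomial_4k_series_at_minus_2:
  "(\<lambda>k. (11319 * real k ^ 2 - 497 * real k - 746) /
      ((4 * real k + 1) * (-2) ^ k * real ((4 * k) choose k))) sums (48 * ln 2 - 992)"
proof -
  define F :: "real \<Rightarrow> real" where "F = (\<lambda>t.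
    (2976 - 128*t - 21310*t^2 + 37524*t^3 - 27108*t^4 + 6832*t^5 + 282*t^6 - 60*t^7)
      / (-2 - t * (1 - t)^3)^2 + (- 36) * ln (2 - t) + 12 * ln (1 + t - t^2 + t^3))"
  have "(\<lambda>k. (11319 * real k ^ 2 + (- 497) * real k + (- 746)) /
      ((4 * real k + 1) * (-2) ^ k * real ((4 * k) choose k))) sums (F 1 - F 0)"
  proof (rule quadratic_over_binomial_4k_sums)
    fix t :: real
    assume "t \<in> {0..1}"
    then have "0 \<le> t" "t \<le> 1" "t^2 \<le> t" "0 \<le> t^3"
      by (auto simp: power2_eq_square mult_left_le_one_le)
    then have pos: "0 < 2 - t" "0 < 1 + t - t^2 + t^3"
      by linarith+
    show "(F has_real_derivative quadratic_gf 11319 (- 497) (- 746) (t * (1 - t)^3 / - 2))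
        (at t within {0..1})"
      unfolding F_def
      by (rule has_field_derivative_at_within, rule has_real_derivative_quadratic_gf[where k = "-1"],
          (auto intro!: derivative_eq_intros)[3]) (use pos in simp_all, algebra+)
  qed simp
  also have "F 1 - F 0 = 48 * ln 2 - 992"
    by (simp add: F_def)
  finally show ?thesis
    by simp
qed

lemma binomial_4k_series_at_minus_24:
  "(\<lambda>k. (39083 * real k ^ 2 - 2829 * real k - 3106) /
      ((4 * real k + 1) * (-24) ^ k * real ((4 * k) choose k))) sums (- 3200 - 64 * ln (2 / 3))"
proof -
  define F :: "real \<Rightarrow> real" where "F = (\<lambda>t.
    (1382400 - 1686528*t - 892008*t^2 + 1588368*t^3 - 1162800*t^4 + 309312*t^5 + 600*t^6 - 144*t^7)
      / (-24 - t * (1 - t)^3)^2 + (- 48) * ln ((3 - t) / 3) + 16 * ln ((8 + 3*t + t^3) / 8))"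
  have "(\<lambda>k. (39083 * real k ^ 2 + (- 2829) * real k + (- 3106)) /
      ((4 * real k + 1) * (-24) ^ k * real ((4 * k) choose k))) sums (F 1 - F 0)"
  proof (rule quadratic_over_binomial_4k_sums)
    fix t :: real
    assume "t \<in> {0..1}"
    then have "0 \<le> t" "t \<le> 1" "0 \<le> t^3"
      by auto
    then have pos: "0 < (3 - t) / 3" "0 < (8 + 3*t + t^3) / 8"
      by (intro divide_pos_pos; linarith)+
    show "(F has_real_derivative quadratic_gf 39083 (- 2829) (- 3106) (t * (1 - t)^3 / - 24))
        (at t within {0..1})"
      unfolding F_def
      by (rule has_field_derivative_at_within, rule has_real_derivative_quadratic_gf[where k = "-24"],
          (auto intro!: derivative_eq_intros)[3]) (use pos in simp_all, algebra+)
  qed simp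
  also have "F 1 - F 0 = - 3200 - 64 * ln (2 / 3)"
    using ln_div[of 3 2] ln_div[of 2 3] by (simp add: F_def)
  finally show ?thesis
    by simp
qed

lemma binomial_4k_series_at_minus_192:
  "(\<lambda>k. (442611 * real k ^ 2 + 41347 * real k - 17434) /
      ((4 * real k + 1) * (-192) ^ k * real ((4 * k) choose k))) sums (- 17408 + 512 * ln (3 / 4))"
proof -
  define F :: "real \<Rightarrow> real" where "F = (\<lambda>t.
    (481296384 - 631406592*t - 67417920*t^2 + 124699776*t^3 - 92203392*t^4 + 24611328*t^5
        - 13632*t^6 + 1920*t^7)
      / (-192 - t * (1 - t)^3)^2 + (- 384) * ln ((3 + t) / 3)
      + 128 * ln ((64 - 21*t + 6*t^2 - t^3) / 64))"
  have "(\<lambda>k. (442611 * real k ^ 2 + 41347 * real k + (- 17434)) /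
      ((4 * real k + 1) * (-192) ^ k * real ((4 * k) choose k))) sums (F 1 - F 0)"
  proof (rule quadratic_over_binomial_4k_sums)
    fix t :: real
    assume "t \<in> {0..1}"
    then have "0 \<le> t" "t \<le> 1" "0 \<le> t^2" "t^3 \<le> 1"
      by (auto simp: power_le_one)
    then have pos: "0 < (3 + t) / 3" "0 < (64 - 21*t + 6*t^2 - t^3) / 64"
      by (intro divide_pos_pos; linarith)+
    show "(F has_real_derivative quadratic_gf 442611 41347 (- 17434) (t * (1 - t)^3 / - 192))
        (at t within {0..1})"
      unfolding F_def
      by (rule has_field_derivative_at_within, rule has_real_derivative_quadratic_gf[where k = "-192"],
          (auto intro!: derivative_eq_intros)[3]) (use pos in simp_all, algebra+)
  qed simp
  also have "F 1 - F 0 = - 17408 + 512 * ln (3 / 4)"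
    using ln_div[of 4 3] ln_div[of 3 4] by (simp add: F_def)
  finally show ?thesis
    by simp
qed

theorem lemma3p3:
  shows "((\<lambda>k::nat. (11319 * real (k+1)^2 - 497 * real (k+1) - 746) /
            ((4 * real (k+1) + 1) * (-2) ^ (k+1) * real ((4*(k+1)) choose (k+1))))
           sums (48 * ln 2 - 246)) \<and>
        ((\<lambda>k::nat. (39083 * real (k+1)^2 - 2829 * real (k+1) - 3106) /
            ((4 * real (k+1) + 1) * (-24) ^ (k+1) * real ((4*(k+1)) choose (k+1))))
           sums (-94 - 64 * ln (2/3))) \<and>
        ((\<lambda>k::nat. (442611 * real (k+1)^2 + 41347 * real (k+1) - 17434) /
            ((4 * real (k+1) + 1) * (-192) ^ (k+1) * real ((4*(k+1)) choose (k+1))))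
           sums (26 + 512 * ln (3/4)))"
  using sums_split_initial_segment[OF binomial_4k_series_at_minus_2, of 1]
    sums_split_initial_segment[OF binomial_4k_series_at_minus_24, of 1]
    sums_split_initial_segment[OF binomial_4k_series_at_minus_192, of 1]
  by simp

end
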